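(* Let $n,m\ge1$ and let $I=(\bar v_1,\dots,\bar v_m,\bar v)$ with $\bar v_i,\bar v\in\mathbb{Z}_3^n$. Set $\bar v'=\bar v+\sum_{i=1}^m\bar v_i$ and let $E_I$ be the equation $$\prod_{i=1}^m z_i^{-1}c_{\bar v_i}z_i=c_{\bar v'}$$ over $\mathbb{Z}_3^n\rtimes\mathbb{Z}_3^\ast$, where $c_{\bar w}=(\bar w,1)$. Then there exist $\varepsilon_1,\dots,\varepsilon_m\in\{0,1\}$ with $\sum_{i=1}^m\varepsilon_i\bar v_i=\bar v$ in $\mathbb{Z}_3^n$ if and only if $E_I$ has a solution $(z_1,\dots,z_m)$ in $\mathbb{Z}_3^n\rtimes\mathbb{Z}_3^\ast$.
   Context: $\mathbb{Z}_p^n\rtimes\mathbb{Z}_p^\ast$ is the set of pairs $(\bar x,\alpha)$ with $\bar x\in\mathbb{Z}_p^n$, $\alpha\in\mathbb{Z}_p^\ast$, with multiplication $(\bar x,\alpha)(\bar y,\beta)=(\bar x+\alpha\bar y,\alpha\beta)$ (scalar multiplication mod $p$). *)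

theory Defs
  imports "HOL-Analysis.Finite_Cartesian_Product" "HOL-Library.Numeral_Type" "HOL-Algebra.Group"
begin

text \<open>The group Z_3^n \<rtimes> Z_3^*: pairs (x, a) with x a vector over Z_3 (the type 3,
  integers mod 3) indexed by a finite type 'n (so n = CARD('n) \<ge> 1), and a a unit of Z_3,
  with multiplication (x,a)(y,b) = (x + a y, a b).\<close>
definition SD3 :: "((3, 'n::finite) vec \<times> 3) monoid" where
  "SD3 = \<lparr> carrier = {(x, a). a \<noteq> 0},
           mult = (\<lambda>(x, a) (y, b). (x + a *s y, a * b)),
           one = (0, 1) \<rparr>"

definition cst :: "(3, 'n::finite) vec \<Rightarrow> (3, 'n) vec \<times> 3" where
  "cst w = (w, 1)"

definition gprod :: "('a, 'b) monoid_scheme \<Rightarrow> 'a list \<Rightarrow> 'a" where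
  "gprod G xs = foldr (\<lambda>a b. a \<otimes>\<^bsub>G\<^esub> b) xs \<one>\<^bsub>G\<^esub>"

end

theory Submission
  imports Defs
begin

text \<open>Conjugating \<open>c\<^sub>w\<close> by \<open>(x, a)\<close> gives \<open>c\<^sub>a\<^sub>w\<close>, and the constants multiply by adding
  their indices. So the left-hand side of \<open>E\<^sub>I\<close> is \<open>c\<^sub>w\<close> with \<open>w = \<Sum> a\<^sub>i v\<^sub>i\<close>, where
  \<open>a\<^sub>i\<close> is the second coordinate of \<open>z\<^sub>i\<close>, and the \<open>a\<^sub>i\<close> range freely over the units of
  \<open>\<int>\<^sub>3\<close>. These units are exactly the \<open>\<epsilon> + 1\<close> with \<open>\<epsilon> \<in> {0, 1}\<close>, and
  \<open>\<Sum> (\<epsilon>\<^sub>i + 1) v\<^sub>i = v + \<Sum> v\<^sub>i\<close> is the same as \<open>\<Sum> \<epsilon>\<^sub>i v\<^sub>i = v\<close>.\<close>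

lemma Z3_cases: "(a::3) = 0 \<or> a = 1 \<or> a = 2"
proof (cases a)
  case (of_int z)
  then have "z = 0 \<or> z = 1 \<or> z = 2" by auto
  with of_int show ?thesis by auto
qed

lemma Z3_minus_one_mem_01: "(a::3) \<noteq> 0 \<Longrightarrow> a - 1 \<in> {0, 1}"
  using Z3_cases[of a] by auto

lemma Z3_nonzero_mult: "(a::3) \<noteq> 0 \<Longrightarrow> b \<noteq> 0 \<Longrightarrow> a * b \<noteq> 0"
  using Z3_cases[of a] Z3_cases[of b] by auto

lemma Z3_nonzero_square: "(a::3) \<noteq> 0 \<Longrightarrow> a * a = 1"
  using Z3_cases[of a] by auto

lemma SD3_mult [simp]: "(x, a) \<otimes>\<^bsub>SD3\<^esub> (y, b) = (x + a *s y, a * b)"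
  by (simp add: SD3_def)

lemma SD3_one [simp]: "\<one>\<^bsub>SD3\<^esub> = (0, 1)"
  by (simp add: SD3_def)

lemma SD3_carrier_iff [simp]: "(x, a) \<in> carrier SD3 \<longleftrightarrow> a \<noteq> 0"
  by (simp add: SD3_def)

lemma group_SD3: "group (SD3 :: ((3, 'n::finite) vec \<times> 3) monoid)"
proof (rule groupI)
  fix g assume "g \<in> carrier SD3"
  then obtain x a where g: "g = (x, a)" "a \<noteq> 0" by (cases g) auto
  then have "(- (a *s x), a) \<otimes>\<^bsub>SD3\<^esub> g = \<one>\<^bsub>SD3\<^esub>"
    by (simp add: Z3_nonzero_square vector_smult_rneg vector_smult_assoc)
  with g show "\<exists>h \<in> carrier SD3. h \<otimes>\<^bsub>SD3\<^esub> g = \<one>\<^bsub>SD3\<^esub>"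
    by (intro bexI[of _ "(- (a *s x), a)"]) simp_all
next
  fix g h :: "(3, 'n) vec \<times> 3"
  assume "g \<in> carrier SD3" "h \<in> carrier SD3"
  then show "g \<otimes>\<^bsub>SD3\<^esub> h \<in> carrier SD3"
    by (cases g, cases h) (simp add: Z3_nonzero_mult)
next
  fix g h k :: "(3, 'n) vec \<times> 3"
  show "g \<otimes>\<^bsub>SD3\<^esub> h \<otimes>\<^bsub>SD3\<^esub> k = g \<otimes>\<^bsub>SD3\<^esub> (h \<otimes>\<^bsub>SD3\<^esub> k)"
    by (cases g, cases h, cases k)
      (simp add: vector_add_ldistrib vector_smult_assoc mult.assoc add.assoc)
qed (auto simp: SD3_def)

lemma SD3_inv: "(a::3) \<noteq> 0 \<Longrightarrow> inv\<^bsub>SD3\<^esub> (x, a) = (- (a *s x), a)"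
  by (rule group.inv_equality[OF group_SD3])
    (simp_all add: Z3_nonzero_square vector_smult_rneg vector_smult_assoc)

lemma SD3_conj_cst:
  assumes "z \<in> carrier SD3"
  shows "inv\<^bsub>SD3\<^esub> z \<otimes>\<^bsub>SD3\<^esub> cst w \<otimes>\<^bsub>SD3\<^esub> z = cst (snd z *s w)"
proof -
  obtain x a where "z = (x, a)" "a \<noteq> 0" using assms by (cases z) auto
  then show ?thesis
    by (simp add: SD3_inv cst_def Z3_nonzero_square vector_smult_assoc)
qed

lemma gprod_SD3_cst: "gprod SD3 (map (\<lambda>i. cst (f i)) xs) = cst (\<Sum>i\<leftarrow>xs. f i)"
  by (induction xs) (simp_all add: gprod_def cst_def)

lemma gprod_SD3_conj_cst:
  assumes "\<And>i. i < n \<Longrightarrow> zs ! i \<in> carrier SD3"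
  shows "gprod SD3 (map (\<lambda>i. inv\<^bsub>SD3\<^esub> (zs ! i) \<otimes>\<^bsub>SD3\<^esub> cst (ws i) \<otimes>\<^bsub>SD3\<^esub> (zs ! i)) [0..<n])
    = cst (\<Sum>i<n. snd (zs ! i) *s ws i)"
proof -
  have map_eq: "map (\<lambda>i. inv\<^bsub>SD3\<^esub> (zs ! i) \<otimes>\<^bsub>SD3\<^esub> cst (ws i) \<otimes>\<^bsub>SD3\<^esub> (zs ! i)) [0..<n]
      = map (\<lambda>i. cst (snd (zs ! i) *s ws i)) [0..<n]"
    by (rule map_cong) (simp_all add: SD3_conj_cst assms)
  show ?thesis
    unfolding map_eq gprod_SD3_cst by (simp add: sum_list_sum_nth atLeast0LessThan)
qed

lemma ex_01_coeffs_iff_ex_unit_coeffs: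
  fixes w :: "nat \<Rightarrow> (3, 'n::finite) vec"
  shows "(\<exists>eps :: 3 list. length eps = n \<and> set eps \<subseteq> {0, 1} \<and> (\<Sum>i<n. (eps ! i) *s w i) = v)
    \<longleftrightarrow> (\<exists>as :: 3 list. length as = n \<and> 0 \<notin> set as \<and>
           (\<Sum>i<n. (as ! i) *s w i) = v + (\<Sum>i<n. w i))" (is "?L \<longleftrightarrow> ?R")
proof
  assume ?L
  then obtain eps :: "3 list" where eps: "length eps = n" "set eps \<subseteq> {0, 1}"
    "(\<Sum>i<n. (eps ! i) *s w i) = v" by blast
  let ?as = "map (\<lambda>e. e + 1) eps"
  have "length ?as = n" using eps(1) by simp
  moreover have "0 \<notin> set ?as" using eps(2) by auto
  moreover have "(\<Sum>i<n. (?as ! i) *s w i) = v + (\<Sum>i<n. w i)"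
    using eps(1,3) by (simp add: vector_sadd_rdistrib sum.distrib)
  ultimately show ?R by blast
next
  assume ?R
  then obtain as :: "3 list" where as: "length as = n" "0 \<notin> set as"
    "(\<Sum>i<n. (as ! i) *s w i) = v + (\<Sum>i<n. w i)" by blast
  let ?eps = "map (\<lambda>a. a - 1) as"
  have "length ?eps = n" using as(1) by simp
  moreover have "set ?eps \<subseteq> {0, 1}"
  proof
    fix e assume "e \<in> set ?eps"
    then obtain a where "a \<in> set as" and e: "e = a - 1" by auto
    with as(2) have "a \<noteq> 0" by blast
    then show "e \<in> {0, 1}" unfolding e by (rule Z3_minus_one_mem_01)
  qed
  moreover have "(\<Sum>i<n. (?eps ! i) *s w i) = v"
    using as(1,3) by (simp add: vector_sub_rdistrib sum_subtractf)
  ultimately show ?L by blast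
qed

lemma ex_SD3_list_iff_ex_unit_list:
  "(\<exists>zs :: ((3, 'n::finite) vec \<times> 3) list.
      length zs = n \<and> set zs \<subseteq> carrier SD3 \<and> P (map snd zs))
    \<longleftrightarrow> (\<exists>as. length as = n \<and> 0 \<notin> set as \<and> P as)" (is "?L \<longleftrightarrow> ?R")
proof
  assume ?L
  then obtain zs :: "((3, 'n) vec \<times> 3) list"
    where zs: "length zs = n" "set zs \<subseteq> carrier SD3" "P (map snd zs)" by blast
  have "0 \<notin> set (map snd zs)"
  proof
    assume "0 \<in> set (map snd zs)"
    then obtain x where "(x, 0) \<in> set zs" by auto
    with zs(2) show False by auto
  qed
  with zs show ?R by (metis length_map)
next
  assume ?R
  then obtain as where "length as = n" "0 \<notin> set as" "P as" by blast
  then show ?L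
    by (intro exI[of _ "map (\<lambda>a. (0, a)) as"]) (auto simp: comp_def)
qed

theorem proposition4p6:
  fixes vs :: "(3, 'n::finite) vec list" and v :: "(3, 'n) vec"
  assumes "length vs \<ge> 1"
  shows "(\<exists>eps :: 3 list. length eps = length vs \<and> set eps \<subseteq> {0, 1} \<and>
            (\<Sum>i<length vs. (eps ! i) *s (vs ! i)) = v)
     \<longleftrightarrow>
         (\<exists>zs. length zs = length vs \<and> set zs \<subseteq> carrier SD3 \<and>
            gprod SD3 (map (\<lambda>i. inv\<^bsub>SD3\<^esub> (zs ! i) \<otimes>\<^bsub>SD3\<^esub> cst (vs ! i) \<otimes>\<^bsub>SD3\<^esub> (zs ! i))
                          [0..<length vs])
            = cst (v + sum_list vs))"
proof -
  let ?n = "length vs"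
  let ?unit_eq = "\<lambda>as :: 3 list. (\<Sum>i<?n. (as ! i) *s (vs ! i)) = v + (\<Sum>i<?n. vs ! i)"
  have E_I_iff: "gprod SD3 (map (\<lambda>i. inv\<^bsub>SD3\<^esub> (zs ! i) \<otimes>\<^bsub>SD3\<^esub> cst (vs ! i) \<otimes>\<^bsub>SD3\<^esub> (zs ! i))
        [0..<?n]) = cst (v + sum_list vs) \<longleftrightarrow> ?unit_eq (map snd zs)"
    if "length zs = ?n" "set zs \<subseteq> carrier SD3" for zs
    using that
    by (subst gprod_SD3_conj_cst) (auto simp: cst_def sum_list_sum_nth atLeast0LessThan)
  show ?thesis
    unfolding ex_01_coeffs_iff_ex_unit_coeffs
    by (rule ex_SD3_list_iff_ex_unit_list[where 'n = 'n and P = ?unit_eq, symmetric, THEN trans],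
        intro ex_cong1) (use E_I_iff in blast)
qed

end
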